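(* In the setting of the context (linear turning rate), suppose that at the $n$-th jump the exact and discretized processes coincide: $\tilde T_n=T_n$, $\tilde X_{T_n}=X_{T_n}$, $\tilde V_{T_n}=\mathcal V_n$ and $\tilde Y_{T_n}=Y_{T_n}$ (hence $\tilde Z_{T_n}=Z_{T_n}$). Then there is a constant $C$ independent of $\epsilon$, $\delta t$ and $\theta_{n+1}$ such that $$|T_{n+1}-\tilde T_{n+1}|\le C\epsilon^2\,\delta t\,\theta_{n+1}^2\quad\text{and}\quad |X_{T_{n+1}}-\tilde X_{\tilde T_{n+1}}|\le C\epsilon^3\,\delta t\,\theta_{n+1}^2.$$
   Context: Let $d,n\ge1$, $\epsilon>0$, $\delta t>0$. $S:\mathbb{R}^d\to\mathbb{R}^n$ is smooth and bounded with bounded first and second derivatives, $\nabla S(x)\in\mathbb{R}^{n\times d}$ its Jacobian. $\tau_\epsilon$ is an invertible $n\times n$ matrix, and the rate is linear: $\lambda(z)=\lambda_0-b^Tz$, assumed to satisfy $0<\lambda_{\min}\le\lambda\le\lambda_{\max}$ along the trajectories. Exact process between jumps $T_n$ and $T_{n+1}$: $\frac{\mathrm{d}X_t}{\mathrm{d}t}=\epsilon\mathcal V_n$, $\frac{\mathrm{d}Y_t}{\mathrm{d}t}=-\tau_\epsilon^{-1}(Y_t-S(X_t))$, $Z_t=S(X_t)-Y_t$, and $T_{n+1}$ is defined by $\int_{T_n}^{T_{n+1}}\lambda(Z_t)\mathrm{d}t=\theta_{n+1}$, where $\theta_{n+1}>0$ is given and $\mathcal V_n\in\mathbb{S}^{d-1}$.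 Discretized process: with $t_{n,k}=\tilde T_n+k\delta t$, $\tilde X_{n,k}=\tilde X_{t_{n,k}}$, $\tilde Z_{n,k}=\tilde Z_{t_{n,k}}$, define for $t\in[t_{n,k},t_{n,k+1}]$: $\tilde X_t=\tilde X_{n,k}+\epsilon\mathcal V_n(t-t_{n,k})$ and $\tilde Z_t=e^{-(t-t_{n,k})\tau_\epsilon^{-1}}\tilde Z_{n,k}+\epsilon\tau_\epsilon(\mathrm{Id}-e^{-(t-t_{n,k})\tau_\epsilon^{-1}})\nabla S(\tilde X_{n,k})\mathcal V_n$; the discrete jump time $\tilde T_{n+1}$ is defined by $\int_{\tilde T_n}^{\tilde T_{n+1}}\lambda(\tilde Z_t)\mathrm{d}t=\theta_{n+1}$. It is further assumed (as throughout the paper) that $\|e^{-t\tau_\epsilon^{-1}}\|$ is bounded uniformly in $t\ge0$ and $\epsilon$. *)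

theory Defs
  imports "HOL-Analysis.Analysis"
begin

definition op_pow :: "('a::real_normed_vector \<Rightarrow>\<^sub>L 'a) \<Rightarrow> nat \<Rightarrow> ('a \<Rightarrow>\<^sub>L 'a)" where
  "op_pow A k = ((\<lambda>B. A o\<^sub>L B) ^^ k) id_blinfun"

definition op_exp :: "('a::banach \<Rightarrow>\<^sub>L 'a) \<Rightarrow> ('a \<Rightarrow>\<^sub>L 'a)" where
  "op_exp A = (\<Sum>k. (1 / fact k) *\<^sub>R op_pow A k)"

definition semigrp :: "('a::banach \<Rightarrow>\<^sub>L 'a) \<Rightarrow> real \<Rightarrow> ('a \<Rightarrow>\<^sub>L 'a)" where
  "semigrp tauinv t = op_exp (- (t *\<^sub>R tauinv))"

definition rate :: "real \<Rightarrow> 'n::euclidean_space \<Rightarrow> 'n \<Rightarrow> real" where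
  "rate lam0 b z = lam0 - b \<bullet> z"

primrec disc_grid ::
  "('d::euclidean_space \<Rightarrow> ('d \<Rightarrow>\<^sub>L 'n::euclidean_space)) \<Rightarrow> ('n \<Rightarrow>\<^sub>L 'n) \<Rightarrow> ('n \<Rightarrow>\<^sub>L 'n)
   \<Rightarrow> real \<Rightarrow> real \<Rightarrow> 'd \<Rightarrow> 'd \<Rightarrow> 'n \<Rightarrow> nat \<Rightarrow> 'd \<times> 'n" where
  "disc_grid DS tau tauinv eps dt V X0 Z0 0 = (X0, Z0)"
| "disc_grid DS tau tauinv eps dt V X0 Z0 (Suc k) =
     (let (x, z) = disc_grid DS tau tauinv eps dt V X0 Z0 k;
          w = blinfun_apply (DS x) V
      in (x + (eps * dt) *\<^sub>R V,
          blinfun_apply (semigrp tauinv dt) z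
          + eps *\<^sub>R blinfun_apply tau (w - blinfun_apply (semigrp tauinv dt) w)))"

definition disc_idx :: "real \<Rightarrow> real \<Rightarrow> real \<Rightarrow> nat" where
  "disc_idx dt T0 t = nat \<lfloor>(t - T0) / dt\<rfloor>"

definition disc_X ::
  "('d::euclidean_space \<Rightarrow> ('d \<Rightarrow>\<^sub>L 'n::euclidean_space)) \<Rightarrow> ('n \<Rightarrow>\<^sub>L 'n) \<Rightarrow> ('n \<Rightarrow>\<^sub>L 'n)
   \<Rightarrow> real \<Rightarrow> real \<Rightarrow> 'd \<Rightarrow> real \<Rightarrow> 'd \<Rightarrow> 'n \<Rightarrow> real \<Rightarrow> 'd" where
  "disc_X DS tau tauinv eps dt V T0 X0 Z0 t =
     (let k = disc_idx dt T0 t; tk = T0 + real k * dt;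
          (x, z) = disc_grid DS tau tauinv eps dt V X0 Z0 k
      in x + (eps * (t - tk)) *\<^sub>R V)"

definition disc_Z ::
  "('d::euclidean_space \<Rightarrow> ('d \<Rightarrow>\<^sub>L 'n::euclidean_space)) \<Rightarrow> ('n \<Rightarrow>\<^sub>L 'n) \<Rightarrow> ('n \<Rightarrow>\<^sub>L 'n)
   \<Rightarrow> real \<Rightarrow> real \<Rightarrow> 'd \<Rightarrow> real \<Rightarrow> 'd \<Rightarrow> 'n \<Rightarrow> real \<Rightarrow> 'n" where
  "disc_Z DS tau tauinv eps dt V T0 X0 Z0 t =
     (let k = disc_idx dt T0 t; tk = T0 + real k * dt;
          (x, z) = disc_grid DS tau tauinv eps dt V X0 Z0 k;
          w = blinfun_apply (DS x) V
      in blinfun_apply (semigrp tauinv (t - tk)) z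
         + eps *\<^sub>R blinfun_apply tau (w - blinfun_apply (semigrp tauinv (t - tk)) w))"

end

theory Submission
  imports Defs
begin

text \<open>
  Between two jumps the rate is \<open>b\<close>-linear in \<open>Z\<close>, so the two jump times are the hitting times of
  the same level \<open>\<theta>\<close> by two integrals whose integrands differ by at most \<open>\<bar>b\<bar>\<close> times the error
  \<open>Z - Z\<^sub>\<delta>\<^sub>t\<close>. Both processes solve \<open>Z' = -\<tau>\<^sup>-\<^sup>1 Z + \<epsilon> \<nabla>S(x) V\<close>, the discrete one with \<open>x\<close> frozen at
  the last grid point, which lags behind \<open>X\<close> by at most \<open>\<epsilon> \<delta>t\<close>. By Duhamel's formula the error at
  time \<open>s\<close> is therefore at most \<open>M L \<epsilon>\<^sup>2 \<delta>t (s - T\<^sub>n)\<close>, with \<open>M\<close> the bound of the semigroup and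
  \<open>L\<close> that of \<open>\<nabla>\<^sup>2S\<close>. Since the rate is at least \<open>\<lambda>\<^sub>m\<^sub>i\<^sub>n\<close>, both jumps happen before
  \<open>T\<^sub>n + \<theta>/\<lambda>\<^sub>m\<^sub>i\<^sub>n\<close> and the two hitting times differ by at most
  \<open>\<bar>b\<bar> M L \<epsilon>\<^sup>2 \<delta>t \<theta>\<^sup>2 / \<lambda>\<^sub>m\<^sub>i\<^sub>n\<^sup>3\<close>. Positions move with speed \<open>\<epsilon>\<close> in the same direction, which
  gives the extra factor \<open>\<epsilon>\<close>.
\<close>

section \<open>Bounded linear endomorphisms as a Banach algebra\<close>

text \<open>A copy of \<open>'a \<Rightarrow>\<^sub>L 'a\<close> carrying composition as multiplication, so that the library's
  \<open>exp\<close> on Banach algebras applies and \<open>op_exp\<close> can be identified with it.\<close>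

typedef (overloaded) 'a endo = "UNIV :: ('a::real_normed_vector \<Rightarrow>\<^sub>L 'a) set"
  morphisms Rep_endo Abs_endo by simp

setup_lifting type_definition_endo

instantiation endo :: (real_normed_vector) real_normed_vector
begin
lift_definition norm_endo :: "'a endo \<Rightarrow> real" is norm .
lift_definition minus_endo :: "'a endo \<Rightarrow> 'a endo \<Rightarrow> 'a endo" is "(-)" .
lift_definition plus_endo :: "'a endo \<Rightarrow> 'a endo \<Rightarrow> 'a endo" is "(+)" .
lift_definition uminus_endo :: "'a endo \<Rightarrow> 'a endo" is "uminus" .
lift_definition zero_endo :: "'a endo" is "0" .
lift_definition scaleR_endo :: "real \<Rightarrow> 'a endo \<Rightarrow> 'a endo" is "scaleR" .
definition dist_endo :: "'a endo \<Rightarrow> 'a endo \<Rightarrow> real" where "dist_endo a b = norm (a - b)"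
definition sgn_endo :: "'a endo \<Rightarrow> 'a endo" where "sgn_endo x = scaleR (inverse (norm x)) x"
definition uniformity_endo :: "('a endo \<times> 'a endo) filter" where
  "uniformity_endo = (INF e\<in>{0 <..}. principal {(x, y). dist x y < e})"
definition open_endo :: "'a endo set \<Rightarrow> bool" where
  "open_endo S = (\<forall>x\<in>S. \<forall>\<^sub>F (x', y) in uniformity. x' = x \<longrightarrow> y \<in> S)"
instance
  apply standard
  unfolding dist_endo_def open_endo_def sgn_endo_def uniformity_endo_def
  apply (rule refl | (transfer, force simp: norm_triangle_ineq algebra_simps))+
  done
end

instantiation endo :: ("{real_normed_vector,perfect_space}") real_normed_algebra_1
begin
lift_definition times_endo :: "'a endo \<Rightarrow> 'a endo \<Rightarrow> 'a endo" is "(o\<^sub>L)" .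
lift_definition one_endo :: "'a endo" is "id_blinfun" .
instance
proof
  fix a b c :: "'a endo" and r :: real
  show "a * b * c = a * (b * c)" by transfer (auto intro!: blinfun_eqI)
  show "1 * a = a" by transfer (auto intro!: blinfun_eqI)
  show "a * 1 = a" by transfer (auto intro!: blinfun_eqI)
  show "(a + b) * c = a * c + b * c"
    by transfer (auto intro!: blinfun_eqI simp: blinfun.bilinear_simps)
  show "a * (b + c) = a * b + a * c"
    by transfer (auto intro!: blinfun_eqI simp: blinfun.bilinear_simps)
  show "(0::'a endo) \<noteq> 1"
    by transfer (metis norm_blinfun_id norm_zero zero_neq_one)
  show "r *\<^sub>R a * b = r *\<^sub>R (a * b)"
    by transfer (auto intro!: blinfun_eqI simp: blinfun.bilinear_simps)
  show "a * r *\<^sub>R b = r *\<^sub>R (a * b)"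
    by transfer (auto intro!: blinfun_eqI simp: blinfun.bilinear_simps)
  show "norm (a * b) \<le> norm a * norm b" by transfer (rule norm_blinfun_compose)
  show "norm (1::'a endo) = 1" by transfer simp
qed
end

lemma dist_Rep_endo: "dist (Rep_endo x) (Rep_endo y) = dist x y"
  unfolding dist_norm by transfer simp

instance endo :: (banach) banach
proof
  fix X :: "nat \<Rightarrow> 'a endo"
  assume "Cauchy X"
  then have "Cauchy (\<lambda>n. Rep_endo (X n))" unfolding Cauchy_def dist_Rep_endo .
  then obtain L where L: "(\<lambda>n. Rep_endo (X n)) \<longlonglongrightarrow> L"
    using Cauchy_convergent_iff convergent_def by blast
  have "dist (Rep_endo (X n)) L = dist (X n) (Abs_endo L)" for n
    using dist_Rep_endo[of "X n" "Abs_endo L"] by (simp add: Abs_endo_inverse)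
  with L have "X \<longlonglongrightarrow> Abs_endo L" unfolding tendsto_iff by simp
  then show "convergent X" unfolding convergent_def by blast
qed

lemma bounded_linear_Rep_endo: "bounded_linear (Rep_endo :: 'a::real_normed_vector endo \<Rightarrow> _)"
proof
  fix x y :: "'a endo" and r :: real
  show "Rep_endo (x + y) = Rep_endo x + Rep_endo y" by transfer simp
  show "Rep_endo (r *\<^sub>R x) = r *\<^sub>R Rep_endo x" by transfer simp
  show "\<exists>K. \<forall>x::'a endo. norm (Rep_endo x) \<le> norm x * K"
    by (rule exI[of _ 1]) (transfer, simp)
qed

lemma Rep_endo_power:
  "Rep_endo (Abs_endo A ^ k) = op_pow (A::'a::{real_normed_vector,perfect_space} \<Rightarrow>\<^sub>L 'a) k"
  by (induction k) (simp_all add: op_pow_def one_endo.rep_eq times_endo.rep_eq Abs_endo_inverse)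

lemma op_exp_eq_exp:
  "op_exp (A::'a::{banach,perfect_space} \<Rightarrow>\<^sub>L 'a) = Rep_endo (exp (Abs_endo A))"
proof -
  have "Rep_endo (exp (Abs_endo A)) = (\<Sum>n. Rep_endo (Abs_endo A ^ n /\<^sub>R fact n))"
    unfolding exp_def by (rule bounded_linear.suminf[OF bounded_linear_Rep_endo summable_exp_generic])
  also have "\<dots> = op_exp A"
    unfolding op_exp_def
    by (rule suminf_cong) (simp add: scaleR_endo.rep_eq Rep_endo_power divide_inverse_commute)
  finally show ?thesis by simp
qed

lemma semigrp_eq_exp:
  "semigrp (A::'a::{banach,perfect_space} \<Rightarrow>\<^sub>L 'a) t = Rep_endo (exp ((- t) *\<^sub>R Abs_endo A))"
  unfolding semigrp_def op_exp_eq_exp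
  by (metis scaleR_endo.abs_eq scaleR_minus_left)

lemma semigrp_0 [simp]: "semigrp (A::'a::{banach,perfect_space} \<Rightarrow>\<^sub>L 'a) 0 = id_blinfun"
  unfolding semigrp_eq_exp by (simp add: one_endo.rep_eq)

lemma semigrp_commute:
  "semigrp A t o\<^sub>L A = A o\<^sub>L semigrp (A::'a::{banach,perfect_space} \<Rightarrow>\<^sub>L 'a) t"
  using arg_cong[OF exp_times_scaleR_commute[of "- t" "Abs_endo A"], of Rep_endo]
  unfolding semigrp_eq_exp times_endo.rep_eq by (simp add: Abs_endo_inverse)

lemma has_vector_derivative_semigrp:
  "(semigrp (A::'a::{banach,perfect_space} \<Rightarrow>\<^sub>L 'a) has_vector_derivative
     - (semigrp A t o\<^sub>L A)) (at t within U)"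
proof -
  have "((\<lambda>t. - t) has_vector_derivative (-1)) (at t within U)"
    by (auto intro!: derivative_eq_intros)
  from vector_diff_chain_within[OF this exp_scaleR_has_vector_derivative_right]
  have "((\<lambda>t. exp ((- t) *\<^sub>R Abs_endo A)) has_vector_derivative
      (-1) *\<^sub>R (exp ((- t) *\<^sub>R Abs_endo A) * Abs_endo A)) (at t within U)"
    by (simp add: o_def)
  from bounded_linear.has_vector_derivative[OF bounded_linear_Rep_endo this]
  show ?thesis unfolding semigrp_eq_exp
    by (simp add: scaleR_endo.rep_eq uminus_endo.rep_eq times_endo.rep_eq Abs_endo_inverse)
qed

lemma has_vector_derivative_semigrp_shift:
  "((\<lambda>s. semigrp (A::'a::{banach,perfect_space} \<Rightarrow>\<^sub>L 'a) (s - c)) has_vector_derivative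
     - (semigrp A (t - c) o\<^sub>L A)) (at t)"
proof -
  have "((\<lambda>s. s - c) has_vector_derivative 1) (at t)" by (auto intro!: derivative_eq_intros)
  from vector_diff_chain_at[OF this has_vector_derivative_semigrp] show ?thesis by (simp add: o_def)
qed

lemma has_vector_derivative_semigrp_reflect:
  "((\<lambda>s. semigrp (A::'a::{banach,perfect_space} \<Rightarrow>\<^sub>L 'a) (c - s)) has_vector_derivative
     semigrp A (c - s) o\<^sub>L A) (at s)"
proof -
  have "((\<lambda>s. c - s) has_vector_derivative -1) (at s)" by (auto intro!: derivative_eq_intros)
  from vector_diff_chain_at[OF this has_vector_derivative_semigrp] show ?thesis by (simp add: o_def)
qed

lemma continuous_on_semigrp_reflect:
  "continuous_on U (\<lambda>s. semigrp (A::'a::{banach,perfect_space} \<Rightarrow>\<^sub>L 'a) (c - s))"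
  by (rule continuous_on_vector_derivative)
    (rule has_vector_derivative_at_within[OF has_vector_derivative_semigrp_reflect])

section \<open>Flows with frozen forcing\<close>

text \<open>The solution of \<open>z' = -\<tau>\<^sup>-\<^sup>1 z + \<epsilon> w\<close> with \<open>w\<close> constant, after time \<open>t\<close> from \<open>z\<close>;
  \<open>A\<close> stands for \<open>\<tau>\<^sup>-\<^sup>1\<close>.\<close>

definition frozen_flow ::
  "('a::{banach,perfect_space} \<Rightarrow>\<^sub>L 'a) \<Rightarrow> ('a \<Rightarrow>\<^sub>L 'a) \<Rightarrow> real \<Rightarrow> 'a \<Rightarrow> 'a \<Rightarrow> real \<Rightarrow> 'a" where
  "frozen_flow tau A eps z w t = semigrp A t z + eps *\<^sub>R tau (w - semigrp A t w)"

lemma frozen_flow_0 [simp]: "frozen_flow tau A eps z w 0 = z"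
  by (simp add: frozen_flow_def)

lemma has_vector_derivative_frozen_flow:
  fixes A tau :: "'a::{banach,perfect_space} \<Rightarrow>\<^sub>L 'a"
  assumes tau_A: "tau o\<^sub>L A = id_blinfun" and A_tau: "A o\<^sub>L tau = id_blinfun"
  shows "((\<lambda>s. frozen_flow tau A eps z w (s - c)) has_vector_derivative
           - A (frozen_flow tau A eps z w (t - c)) + eps *\<^sub>R w) (at t)"
proof -
  define G where "G = semigrp A (t - c)"
  have dG: "((\<lambda>s. semigrp A (s - c) v) has_vector_derivative - G (A v)) (at t)" for v
    using bounded_linear.has_vector_derivative[OF blinfun.bounded_linear_left
        has_vector_derivative_semigrp_shift[of A c t], of v]
    by (simp add: G_def blinfun.minus_left)
  have "((\<lambda>s. w - semigrp A (s - c) w) has_vector_derivative G (A w)) (at t)"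
    using has_vector_derivative_diff[OF has_vector_derivative_const dG] by simp
  from bounded_linear.has_vector_derivative[OF bounded_linear_compose[OF
        bounded_linear_scaleR_right blinfun.bounded_linear_right] this]
  have "((\<lambda>s. frozen_flow tau A eps z w (s - c)) has_vector_derivative
      - G (A z) + eps *\<^sub>R tau (G (A w))) (at t)"
    unfolding frozen_flow_def by (intro has_vector_derivative_add dG)
  moreover have "G (A v) = A (G v)" for v
    using semigrp_commute[of A "t - c"] unfolding G_def by (metis blinfun_apply_blinfun_compose)
  moreover have "tau (A v) = v" "A (tau v) = v" for v
    using tau_A A_tau by (metis blinfun_apply_blinfun_compose blinfun_apply_id_blinfun)+
  ultimately show ?thesis
    unfolding frozen_flow_def G_def by (simp add: blinfun.bilinear_simps algebra_simps)
qed

section \<open>The discretized process\<close>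

lemma fst_disc_grid: "fst (disc_grid DS tau A eps dt V X0 Z0 k) = X0 + (eps * (real k * dt)) *\<^sub>R V"
  by (induction k) (simp_all add: Let_def split_beta algebra_simps)

lemma snd_disc_grid_Suc:
  "snd (disc_grid DS tau A eps dt V X0 Z0 (Suc k)) =
     frozen_flow tau A eps (snd (disc_grid DS tau A eps dt V X0 Z0 k))
       (DS (fst (disc_grid DS tau A eps dt V X0 Z0 k)) V) dt"
  by (simp add: Let_def split_beta frozen_flow_def)

lemma disc_X_eq: "disc_X DS tau A eps dt V T0 X0 Z0 t = X0 + (eps * (t - T0)) *\<^sub>R V"
  unfolding disc_X_def by (simp add: Let_def split_beta fst_disc_grid algebra_simps)

text \<open>The formula of \<open>disc_Z\<close> on the \<open>k\<close>-th cell \<open>[T0 + k dt, T0 + (k+1) dt]\<close>, for all times.\<close>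

definition disc_cell_Z ::
  "('d::euclidean_space \<Rightarrow> ('d \<Rightarrow>\<^sub>L 'n::euclidean_space)) \<Rightarrow> ('n \<Rightarrow>\<^sub>L 'n) \<Rightarrow> ('n \<Rightarrow>\<^sub>L 'n)
   \<Rightarrow> real \<Rightarrow> real \<Rightarrow> 'd \<Rightarrow> real \<Rightarrow> 'd \<Rightarrow> 'n \<Rightarrow> nat \<Rightarrow> real \<Rightarrow> 'n" where
  "disc_cell_Z DS tau A eps dt V T0 X0 Z0 k t =
     frozen_flow tau A eps (snd (disc_grid DS tau A eps dt V X0 Z0 k))
       (DS (fst (disc_grid DS tau A eps dt V X0 Z0 k)) V) (t - (T0 + real k * dt))"

lemma disc_Z_eq_cell:
  "disc_Z DS tau A eps dt V T0 X0 Z0 t = disc_cell_Z DS tau A eps dt V T0 X0 Z0 (disc_idx dt T0 t) t"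
  unfolding disc_Z_def disc_cell_Z_def frozen_flow_def by (simp add: Let_def split_beta)

lemma disc_cell_Z_start:
  "disc_cell_Z DS tau A eps dt V T0 X0 Z0 k (T0 + real k * dt) =
     snd (disc_grid DS tau A eps dt V X0 Z0 k)"
  by (simp add: disc_cell_Z_def)

lemma disc_cell_Z_end:
  "disc_cell_Z DS tau A eps dt V T0 X0 Z0 k (T0 + real (Suc k) * dt) =
     snd (disc_grid DS tau A eps dt V X0 Z0 (Suc k))"
  unfolding disc_cell_Z_def snd_disc_grid_Suc by (simp add: algebra_simps)

lemma disc_idx_eqI:
  assumes "0 < dt" "T0 + real k * dt \<le> t" "t < T0 + real (Suc k) * dt"
  shows "disc_idx dt T0 t = k"
proof -
  have "real k \<le> (t - T0) / dt" "(t - T0) / dt < real k + 1"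
    using assms by (auto simp: field_simps)
  then have "\<lfloor>(t - T0) / dt\<rfloor> = int k" by (simp add: floor_eq_iff)
  then show ?thesis unfolding disc_idx_def by simp
qed

lemma disc_idx_bounds:
  assumes "0 < dt" "T0 \<le> t"
  shows "T0 + real (disc_idx dt T0 t) * dt \<le> t" "t < T0 + real (Suc (disc_idx dt T0 t)) * dt"
proof -
  define f where "f = \<lfloor>(t - T0) / dt\<rfloor>"
  have "0 \<le> (t - T0) / dt" using assms by simp
  then have k: "real (disc_idx dt T0 t) = of_int f"
    unfolding disc_idx_def f_def by simp
  have "of_int f \<le> (t - T0) / dt" "(t - T0) / dt < of_int f + 1"
    unfolding f_def by linarith+
  then have "of_int f * dt \<le> t - T0" "t - T0 < (of_int f + 1) * dt"
    using assms(1) by (simp_all add: le_divide_eq divide_less_eq)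
  then show "T0 + real (disc_idx dt T0 t) * dt \<le> t" "t < T0 + real (Suc (disc_idx dt T0 t)) * dt"
    by (auto simp: algebra_simps k)
qed

lemma disc_Z_eq_cell_on:
  assumes "0 < dt" "T0 + real k * dt \<le> t" "t \<le> T0 + real (Suc k) * dt"
  shows "disc_Z DS tau A eps dt V T0 X0 Z0 t = disc_cell_Z DS tau A eps dt V T0 X0 Z0 k t"
proof (cases "t < T0 + real (Suc k) * dt")
  case True
  then show ?thesis using disc_idx_eqI[OF assms(1,2) True] disc_Z_eq_cell by metis
next
  case False
  then have t: "t = T0 + real (Suc k) * dt" using assms by simp
  then have "disc_idx dt T0 t = Suc k"
    using assms by (intro disc_idx_eqI) auto
  then show ?thesis
    unfolding disc_Z_eq_cell t by (metis disc_cell_Z_start disc_cell_Z_end)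
qed

lemma disc_Z_start:
  assumes "0 < dt"
  shows "disc_Z DS tau A eps dt V T0 X0 Z0 T0 = Z0"
proof -
  have "disc_Z DS tau A eps dt V T0 X0 Z0 T0 = disc_cell_Z DS tau A eps dt V T0 X0 Z0 0 T0"
    using assms by (intro disc_Z_eq_cell_on) auto
  then show ?thesis by (simp add: disc_cell_Z_def)
qed

text \<open>Grid points are where the frozen coefficient jumps; the discrete \<open>Z\<close> itself is continuous
  because each cell starts where the previous one ends.\<close>

lemma continuous_on_disc_Z:
  fixes A tau :: "'n::euclidean_space \<Rightarrow>\<^sub>L 'n"
  assumes "tau o\<^sub>L A = id_blinfun" "A o\<^sub>L tau = id_blinfun" and dt: "0 < dt"
  shows "continuous_on {T0..t} (disc_Z DS tau A eps dt V T0 X0 Z0)"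
proof -
  have cont_k: "continuous_on {T0..T0 + real k * dt} (disc_Z DS tau A eps dt V T0 X0 Z0)" for k
  proof (induction k)
    case (Suc k)
    have "continuous_on {T0 + real k * dt..T0 + real (Suc k) * dt} (disc_cell_Z DS tau A eps dt V T0 X0 Z0 k)"
      unfolding disc_cell_Z_def
      by (rule continuous_on_vector_derivative, rule has_vector_derivative_at_within,
          rule has_vector_derivative_frozen_flow[OF assms(1,2)])
    then have "continuous_on {T0 + real k * dt..T0 + real (Suc k) * dt} (disc_Z DS tau A eps dt V T0 X0 Z0)"
      by (rule continuous_on_eq) (auto intro!: disc_Z_eq_cell_on[OF dt, symmetric])
    moreover have "T0 \<le> T0 + real k * dt" "T0 + real k * dt \<le> T0 + real (Suc k) * dt"
      using dt by (simp_all add: algebra_simps)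
    ultimately show ?case
      using continuous_on_closed_Un[OF _ _ Suc] by (metis closed_atLeastAtMost ivl_disj_un_two_touch(4))
  qed simp
  obtain k :: nat where "(t - T0) / dt \<le> real k" using real_arch_simple by blast
  then have "t \<le> T0 + real k * dt" using dt by (simp add: field_simps)
  then show ?thesis using continuous_on_subset[OF cont_k[of k], of "{T0..t}"] by auto
qed

lemma has_vector_derivative_disc_Z:
  fixes A tau :: "'n::euclidean_space \<Rightarrow>\<^sub>L 'n"
  assumes "tau o\<^sub>L A = id_blinfun" "A o\<^sub>L tau = id_blinfun" and dt: "0 < dt"
    and "T0 \<le> t" and off_grid: "\<And>j. t \<noteq> T0 + real j * dt"
  shows "(disc_Z DS tau A eps dt V T0 X0 Z0 has_vector_derivative
      - A (disc_Z DS tau A eps dt V T0 X0 Z0 t)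
      + eps *\<^sub>R DS (fst (disc_grid DS tau A eps dt V X0 Z0 (disc_idx dt T0 t))) V) (at t)"
proof -
  define k where "k = disc_idx dt T0 t"
  have lo: "T0 + real k * dt < t"
    using disc_idx_bounds(1)[OF dt \<open>T0 \<le> t\<close>] off_grid[of k] unfolding k_def by force
  have hi: "t < T0 + real (Suc k) * dt"
    using disc_idx_bounds(2)[OF dt \<open>T0 \<le> t\<close>] unfolding k_def .
  have "(disc_cell_Z DS tau A eps dt V T0 X0 Z0 k has_vector_derivative
      - A (disc_cell_Z DS tau A eps dt V T0 X0 Z0 k t)
      + eps *\<^sub>R DS (fst (disc_grid DS tau A eps dt V X0 Z0 k)) V) (at t)"
    unfolding disc_cell_Z_def by (rule has_vector_derivative_frozen_flow[OF assms(1,2)])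
  then show ?thesis
    unfolding k_def[symmetric] disc_Z_eq_cell_on[OF dt less_imp_le[OF lo] less_imp_le[OF hi]]
    by (rule has_vector_derivative_transform_within_open
        [where S = "{T0 + real k * dt<..<T0 + real (Suc k) * dt}"])
      (use lo hi in \<open>auto intro: disc_Z_eq_cell_on[OF dt, symmetric]\<close>)
qed

lemma disc_grid_lag:
  assumes "0 < dt" "0 \<le> eps" "norm V = 1" "T0 \<le> t"
  shows "norm (X0 + (eps * (t - T0)) *\<^sub>R V - fst (disc_grid DS tau A eps dt V X0 Z0 (disc_idx dt T0 t)))
    \<le> eps * dt"
proof -
  define s where "s = t - (T0 + real (disc_idx dt T0 t) * dt)"
  have "0 \<le> s" "s \<le> dt"
    using disc_idx_bounds[OF assms(1,4)] unfolding s_def by (auto simp: algebra_simps)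
  moreover have "X0 + (eps * (t - T0)) *\<^sub>R V - fst (disc_grid DS tau A eps dt V X0 Z0 (disc_idx dt T0 t))
      = (eps * s) *\<^sub>R V"
    unfolding fst_disc_grid s_def by (simp add: algebra_simps)
  ultimately show ?thesis using assms(2,3) by (simp add: mult_left_mono)
qed

section \<open>Error of the discretized process\<close>

lemma semigrp_duhamel_bound:
  fixes A :: "'a::{banach,perfect_space} \<Rightarrow>\<^sub>L 'a" and E g :: "real \<Rightarrow> 'a"
  assumes "finite G" "a \<le> t"
    and cont: "continuous_on {a..t} E"
    and deriv: "\<And>s. s \<in> {a<..<t} - G \<Longrightarrow> (E has_vector_derivative - A (E s) + g s) (at s)"
    and "E a = 0"
    and M: "\<And>r. 0 \<le> r \<Longrightarrow> norm (semigrp A r) \<le> M"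
    and K: "\<And>s. s \<in> {a..t} \<Longrightarrow> norm (g s) \<le> K"
  shows "norm (E t) \<le> M * K * (t - a)"
proof -
  define F where "F s = semigrp A (t - s) (E s)" for s
  have "(F has_vector_derivative semigrp A (t - s) (g s)) (at s)" if "s \<in> {a<..<t} - G" for s
  proof -
    have "(F has_vector_derivative
        semigrp A (t - s) (- A (E s) + g s) + (semigrp A (t - s) o\<^sub>L A) (E s)) (at s)"
      unfolding F_def
      by (rule blinfun.has_vector_derivative[OF has_vector_derivative_semigrp_reflect deriv[OF that]])
    then show ?thesis by (simp add: blinfun.bilinear_simps)
  qed
  moreover have "continuous_on {a..t} F"
    unfolding F_def
    by (rule blinfun.continuous_on[OF continuous_on_semigrp_reflect cont])
  ultimately have "((\<lambda>s. semigrp A (t - s) (g s)) has_integral F t - F a) (cbox a t)"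
    unfolding cbox_interval
    by (rule fundamental_theorem_of_calculus_interior_strong[OF \<open>finite G\<close> \<open>a \<le> t\<close>])
  moreover have "0 \<le> M" using M[of 0] norm_ge_zero[of "semigrp A 0"] by linarith
  moreover have "norm (semigrp A (t - s) (g s)) \<le> M * K" if "s \<in> cbox a t" for s
  proof -
    have "norm (semigrp A (t - s) (g s)) \<le> norm (semigrp A (t - s)) * norm (g s)"
      by (rule norm_blinfun)
    also have "\<dots> \<le> M * K"
      using that M[of "t - s"] K[of s] \<open>0 \<le> M\<close> by (auto intro!: mult_mono)
    finally show ?thesis .
  qed
  moreover have "0 \<le> K"
    using K[of a] \<open>a \<le> t\<close> by (metis atLeastAtMost_iff norm_ge_zero order_refl order_trans)
  ultimately have "norm (F t - F a) \<le> M * K * measure lborel (cbox a t)"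
    by (intro has_integral_bound) auto
  then show ?thesis using \<open>E a = 0\<close> \<open>a \<le> t\<close> by (simp add: F_def)
qed

lemma has_vector_derivative_S_line:
  fixes S :: "'d::euclidean_space \<Rightarrow> 'n::euclidean_space" and DS :: "'d \<Rightarrow> ('d \<Rightarrow>\<^sub>L 'n)"
  assumes "\<And>x. (S has_derivative blinfun_apply (DS x)) (at x)"
  shows "((\<lambda>s. S (X0 + (eps * (s - T0)) *\<^sub>R V)) has_vector_derivative
           DS (X0 + (eps * (t - T0)) *\<^sub>R V) (eps *\<^sub>R V)) (at t within U)"
proof -
  have "((\<lambda>s. X0 + (eps * (s - T0)) *\<^sub>R V) has_derivative (\<lambda>h. h *\<^sub>R (eps *\<^sub>R V))) (at t within U)"
    by (auto intro!: derivative_eq_intros simp: algebra_simps)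
  from has_derivative_compose[OF this assms] show ?thesis
    unfolding has_vector_derivative_def by (simp add: blinfun.scaleR_right)
qed

text \<open>The difference of the two \<open>Z\<close> solves the linear equation forced by
  \<open>\<epsilon> (\<nabla>S(X) - \<nabla>S(X\<^sub>k)) V\<close>, which is \<open>O(L \<epsilon>\<^sup>2 \<delta>t)\<close> by the grid lag.\<close>

lemma disc_Z_error:
  fixes S :: "'d::euclidean_space \<Rightarrow> 'n::euclidean_space" and DS :: "'d \<Rightarrow> ('d \<Rightarrow>\<^sub>L 'n)"
    and A tau :: "'n \<Rightarrow>\<^sub>L 'n" and Y :: "real \<Rightarrow> 'n"
  assumes S_deriv: "\<And>x. (S has_derivative blinfun_apply (DS x)) (at x)"
    and Lip: "\<And>x y. norm (DS x - DS y) \<le> L * norm (x - y)" and "0 \<le> L"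
    and inv: "tau o\<^sub>L A = id_blinfun" "A o\<^sub>L tau = id_blinfun"
    and dt: "0 < dt" and "0 \<le> eps" and V: "norm V = 1"
    and M: "\<forall>r\<ge>0. norm (semigrp A r) \<le> M"
    and "Y T0 = Y0"
    and Y_deriv: "\<forall>s\<in>{T0..T}. (Y has_vector_derivative
         (- A (Y s - S (X0 + (eps * (s - T0)) *\<^sub>R V)))) (at s within {T0..T})"
    and t: "T0 \<le> t" "t \<le> T"
  shows "norm ((S (X0 + (eps * (t - T0)) *\<^sub>R V) - Y t) - disc_Z DS tau A eps dt V T0 X0 (S X0 - Y0) t)
           \<le> M * (L * eps^2 * dt) * (t - T0)"
proof -
  define X where "X s = X0 + (eps * (s - T0)) *\<^sub>R V" for s
  define Zd where "Zd = disc_Z DS tau A eps dt V T0 X0 (S X0 - Y0)"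
  define Xd where "Xd s = fst (disc_grid DS tau A eps dt V X0 (S X0 - Y0) (disc_idx dt T0 s))" for s
  define g where "g s = eps *\<^sub>R (DS (X s) V - DS (Xd s) V)" for s
  obtain N :: nat where "(t - T0) / dt \<le> real N" using real_arch_simple by blast
  then have tN: "t \<le> T0 + real N * dt" using dt by (simp add: field_simps)
  have "norm ((S (X t) - Y t) - Zd t) \<le> M * (L * eps^2 * dt) * (t - T0)"
  proof (rule semigrp_duhamel_bound[where G = "(\<lambda>j. T0 + real j * dt) ` {..N}" and g = g])
    fix s assume s: "s \<in> {T0<..<t} - (\<lambda>j. T0 + real j * dt) ` {..N}"
    have off_grid: "s \<noteq> T0 + real j * dt" for j
    proof (cases "j \<le> N")
      case False
      then have "real N * dt \<le> real j * dt" using dt by simp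
      then show ?thesis using s tN by auto
    qed (use s in auto)
    have "s \<in> {T0..T}" "at s within {T0..T} = at s" using s t by (auto intro: at_within_Icc_at)
    then have dY: "(Y has_vector_derivative - A (Y s - S (X s))) (at s)"
      using Y_deriv unfolding X_def by metis
    have dSX: "((\<lambda>s. S (X s)) has_vector_derivative DS (X s) (eps *\<^sub>R V)) (at s)"
      unfolding X_def by (rule has_vector_derivative_S_line[OF S_deriv])
    have dZd: "(Zd has_vector_derivative - A (Zd s) + eps *\<^sub>R DS (Xd s) V) (at s)"
      unfolding Zd_def Xd_def using s off_grid by (intro has_vector_derivative_disc_Z inv dt) auto
    have "((\<lambda>s. (S (X s) - Y s) - Zd s) has_vector_derivative
        (DS (X s) (eps *\<^sub>R V) - - A (Y s - S (X s))) - (- A (Zd s) + eps *\<^sub>R DS (Xd s) V)) (at s)"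
      by (intro has_vector_derivative_diff dSX dY dZd)
    then show "((\<lambda>s. (S (X s) - Y s) - Zd s) has_vector_derivative
        - A ((S (X s) - Y s) - Zd s) + g s) (at s)"
      unfolding g_def by (simp add: blinfun.bilinear_simps algebra_simps)
  next
    have "continuous_on {T0..t} Y"
      by (rule continuous_on_subset[OF continuous_on_vector_derivative[OF Y_deriv[rule_format]]])
        (use t in auto)
    moreover have "continuous_on {T0..t} (\<lambda>s. S (X s))"
      unfolding X_def
      by (rule continuous_on_vector_derivative) (rule has_vector_derivative_S_line[OF S_deriv])
    ultimately show "continuous_on {T0..t} (\<lambda>s. (S (X s) - Y s) - Zd s)"
      unfolding Zd_def by (intro continuous_intros continuous_on_disc_Z inv dt)
  next
    show "(S (X T0) - Y T0) - Zd T0 = 0"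
      unfolding Zd_def X_def using \<open>Y T0 = Y0\<close> disc_Z_start[OF dt, of DS tau A eps V T0 X0 "S X0 - Y0"] by simp
  next
    fix s assume s: "s \<in> {T0..t}"
    have "norm (DS (X s) V - DS (Xd s) V) \<le> norm (DS (X s) - DS (Xd s)) * norm V"
      by (metis blinfun.diff_left norm_blinfun)
    also have "\<dots> \<le> L * norm (X s - Xd s)" using Lip V by simp
    also have "\<dots> \<le> L * (eps * dt)"
      using disc_grid_lag[OF dt \<open>0 \<le> eps\<close> V, of T0 s X0 DS tau A "S X0 - Y0"] s \<open>0 \<le> L\<close>
      unfolding X_def Xd_def by (simp add: mult_left_mono)
    finally have "eps * norm (DS (X s) V - DS (Xd s) V) \<le> eps * (L * (eps * dt))"
      using \<open>0 \<le> eps\<close> by (rule mult_left_mono)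
    moreover have "norm (g s) = eps * norm (DS (X s) V - DS (Xd s) V)"
      unfolding g_def using \<open>0 \<le> eps\<close> by simp
    ultimately show "norm (g s) \<le> L * eps^2 * dt"
      by (simp add: power2_eq_square mult.commute mult.left_commute)
  qed (use M t in auto)
  then show ?thesis unfolding X_def Zd_def .
qed

section \<open>Hitting times of integrals\<close>

lemma hitting_time_le:
  fixes f :: "real \<Rightarrow> real"
  assumes "(f has_integral th) {a..T}" "a \<le> T" "\<And>s. s \<in> {a..T} \<Longrightarrow> lm \<le> f s"
  shows "lm * (T - a) \<le> th"
proof -
  have "integral {a..T} (\<lambda>_. lm) \<le> integral {a..T} f"
    using assms by (intro integral_le) auto
  then show ?thesis using assms(2) integral_unique[OF assms(1)] by (simp add: mult.commute)
qed

lemma hitting_time_diff_le: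
  fixes f g :: "real \<Rightarrow> real"
  assumes f: "(f has_integral th) {a..T}" and g: "(g has_integral th) {a..T'}"
    and "a \<le> T" "T \<le> T'"
    and g_ge: "\<And>s. s \<in> {a..T'} \<Longrightarrow> lm \<le> g s"
    and fg: "\<And>s. s \<in> {a..T} \<Longrightarrow> \<bar>f s - g s\<bar> \<le> K"
  shows "lm * (T' - T) \<le> K * (T - a)"
proof -
  have g_int: "g integrable_on {a..T}" "g integrable_on {T..T'}"
    using g \<open>a \<le> T\<close> \<open>T \<le> T'\<close> by (auto intro: integrable_subinterval_real)
  have "integral {a..T} g + integral {T..T'} g = th"
    using Henstock_Kurzweil_Integration.integral_combine[OF \<open>a \<le> T\<close> \<open>T \<le> T'\<close>
        has_integral_integrable[OF g]] integral_unique[OF g] by simp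
  moreover have "lm * (T' - T) \<le> integral {T..T'} g"
    using hitting_time_le[OF integrable_integral[OF g_int(2)] \<open>T \<le> T'\<close>] g_ge \<open>a \<le> T\<close> by auto
  moreover have "integral {a..T} (\<lambda>s. f s - g s) \<le> integral {a..T} (\<lambda>_. K)"
    using f g_int(1) fg by (intro integral_le) (auto intro: integrable_diff dest: abs_le_D1)
  then have "integral {a..T} f - integral {a..T} g \<le> K * (T - a)"
    using integral_diff[OF has_integral_integrable[OF f] g_int(1)] \<open>a \<le> T\<close>
    by (simp add: mult.commute)
  ultimately show ?thesis using integral_unique[OF f] by linarith
qed

text \<open>Both hitting times lie before \<open>a + th/lm\<close>, where the integrands differ by at most
  \<open>K th/lm\<close>.\<close>

lemma hitting_time_perturbation:
  fixes f g :: "real \<Rightarrow> real"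
  assumes f: "(f has_integral th) {a..T}" and g: "(g has_integral th) {a..T'}"
    and "a \<le> T" "a \<le> T'" "0 < lm" "0 \<le> K"
    and f_ge: "\<And>s. s \<in> {a..T} \<Longrightarrow> lm \<le> f s"
    and g_ge: "\<And>s. s \<in> {a..T'} \<Longrightarrow> lm \<le> g s"
    and fg: "\<And>s. s \<in> {a..min T T'} \<Longrightarrow> \<bar>f s - g s\<bar> \<le> K * (s - a)"
  shows "\<bar>T - T'\<bar> \<le> K * th^2 / lm^3"
proof -
  define m where "m = min T T'"
  have fg_m: "\<bar>f s - g s\<bar> \<le> K * (m - a)" if "s \<in> {a..m}" for s
  proof -
    have "K * (s - a) \<le> K * (m - a)" using that \<open>0 \<le> K\<close> by (simp add: mult_left_mono)
    then show ?thesis using fg[of s] that unfolding m_def by simp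
  qed
  have "lm * \<bar>T - T'\<bar> \<le> K * (m - a) * (m - a)"
  proof (cases "T \<le> T'")
    case True
    then show ?thesis
      using hitting_time_diff_le[OF f g \<open>a \<le> T\<close> True g_ge] fg_m by (simp add: m_def)
  next
    case False
    then show ?thesis
      using hitting_time_diff_le[OF g f \<open>a \<le> T'\<close> _ f_ge, of "K * (m - a)"] fg_m
      by (simp add: m_def abs_minus_commute)
  qed
  also have "\<dots> \<le> K * (th / lm) * (th / lm)"
  proof -
    have "lm * (m - a) \<le> th"
      using hitting_time_le[OF f \<open>a \<le> T\<close> f_ge] \<open>0 < lm\<close> unfolding m_def
      by (smt (verit) mult_left_mono)
    then have lag: "m - a \<le> th / lm" "0 \<le> m - a"
      using \<open>0 < lm\<close> \<open>a \<le> T\<close> \<open>a \<le> T'\<close> by (simp_all add: field_simps m_def)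
    have K_lag: "K * (m - a) \<le> K * (th / lm)" "0 \<le> K * (m - a)"
      using lag \<open>0 \<le> K\<close> by (blast intro: mult_left_mono mult_nonneg_nonneg)+
    show ?thesis
      using mult_mono[OF K_lag(1) lag(1) order_trans[OF K_lag(2,1)] lag(2)] .
  qed
  finally show ?thesis
    using \<open>0 < lm\<close> by (simp add: field_simps power2_eq_square power3_eq_cube)
qed

lemma jump_time_error:
  fixes S :: "'d::euclidean_space \<Rightarrow> 'n::euclidean_space" and DS :: "'d \<Rightarrow> ('d \<Rightarrow>\<^sub>L 'n)"
    and A tau :: "'n \<Rightarrow>\<^sub>L 'n" and Y :: "real \<Rightarrow> 'n"
  assumes S_deriv: "\<And>x. (S has_derivative blinfun_apply (DS x)) (at x)"
    and Lip: "\<And>x y. norm (DS x - DS y) \<le> L * norm (x - y)" and "0 \<le> L"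
    and "0 < lam_min"
    and "0 < eps" "0 < dt"
    and inv: "tau o\<^sub>L A = id_blinfun" "A o\<^sub>L tau = id_blinfun"
    and M: "\<forall>r\<ge>0. norm (semigrp A r) \<le> M"
    and V: "norm V = 1"
    and "T0 \<le> T" "T0 \<le> Tt"
    and "Y T0 = Y0"
    and Y_deriv: "\<forall>s\<in>{T0..T}. (Y has_vector_derivative
         (- A (Y s - S (X0 + (eps * (s - T0)) *\<^sub>R V)))) (at s within {T0..T})"
    and rate_ge: "\<And>s. s \<in> {T0..T} \<Longrightarrow> lam_min \<le> rate lam0 b (S (X0 + (eps * (s - T0)) *\<^sub>R V) - Y s)"
    and disc_rate_ge: "\<And>s. s \<in> {T0..Tt} \<Longrightarrow>
      lam_min \<le> rate lam0 b (disc_Z DS tau A eps dt V T0 X0 (S X0 - Y0) s)"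
    and jump: "((\<lambda>s. rate lam0 b (S (X0 + (eps * (s - T0)) *\<^sub>R V) - Y s)) has_integral theta) {T0..T}"
    and disc_jump: "((\<lambda>s. rate lam0 b (disc_Z DS tau A eps dt V T0 X0 (S X0 - Y0) s)) has_integral theta) {T0..Tt}"
  shows "\<bar>T - Tt\<bar> \<le> norm b * M * L / lam_min ^ 3 * eps^2 * dt * theta^2
    \<and> norm ((X0 + (eps * (T - T0)) *\<^sub>R V) - disc_X DS tau A eps dt V T0 X0 (S X0 - Y0) Tt)
        \<le> norm b * M * L / lam_min ^ 3 * eps^3 * dt * theta^2"
proof -
  define K where "K = norm b * (M * (L * eps^2 * dt))"
  have "0 \<le> M" using M norm_ge_zero order_trans by blast
  then have "0 \<le> K" unfolding K_def using \<open>0 \<le> L\<close> \<open>0 < dt\<close> by simp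
  have "\<bar>T - Tt\<bar> \<le> K * theta^2 / lam_min^3"
  proof (rule hitting_time_perturbation[OF jump disc_jump \<open>T0 \<le> T\<close> \<open>T0 \<le> Tt\<close> \<open>0 < lam_min\<close>
        \<open>0 \<le> K\<close> rate_ge disc_rate_ge])
    fix s assume s: "s \<in> {T0..min T Tt}"
    let ?E = "(S (X0 + (eps * (s - T0)) *\<^sub>R V) - Y s) - disc_Z DS tau A eps dt V T0 X0 (S X0 - Y0) s"
    have "\<bar>rate lam0 b (S (X0 + (eps * (s - T0)) *\<^sub>R V) - Y s)
        - rate lam0 b (disc_Z DS tau A eps dt V T0 X0 (S X0 - Y0) s)\<bar> = \<bar>b \<bullet> ?E\<bar>"
      unfolding rate_def by (simp add: inner_diff_right)
    also have "\<dots> \<le> norm b * norm ?E" by (rule Cauchy_Schwarz_ineq2)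
    also have "\<dots> \<le> norm b * (M * (L * eps^2 * dt) * (s - T0))"
      using s \<open>0 < eps\<close>
      by (intro mult_left_mono disc_Z_error[OF S_deriv Lip \<open>0 \<le> L\<close> inv \<open>0 < dt\<close> _ V M
            \<open>Y T0 = Y0\<close> Y_deriv]) auto
    finally show "\<bar>rate lam0 b (S (X0 + (eps * (s - T0)) *\<^sub>R V) - Y s)
        - rate lam0 b (disc_Z DS tau A eps dt V T0 X0 (S X0 - Y0) s)\<bar> \<le> K * (s - T0)"
      by (simp add: K_def mult.assoc)
  qed
  also have "K * theta^2 / lam_min^3 = norm b * M * L / lam_min ^ 3 * eps^2 * dt * theta^2"
    by (simp add: K_def)
  finally have T_err: "\<bar>T - Tt\<bar> \<le> norm b * M * L / lam_min ^ 3 * eps^2 * dt * theta^2" .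
  have "norm ((X0 + (eps * (T - T0)) *\<^sub>R V) - disc_X DS tau A eps dt V T0 X0 (S X0 - Y0) Tt)
      = eps * \<bar>T - Tt\<bar>"
  proof -
    have "(X0 + (eps * (T - T0)) *\<^sub>R V) - (X0 + (eps * (Tt - T0)) *\<^sub>R V) = (eps * (T - Tt)) *\<^sub>R V"
      by (simp add: algebra_simps)
    then show ?thesis unfolding disc_X_eq using V \<open>0 < eps\<close> by (simp add: abs_mult)
  qed
  also have "\<dots> \<le> eps * (norm b * M * L / lam_min ^ 3 * eps^2 * dt * theta^2)"
    using T_err \<open>0 < eps\<close> by (intro mult_left_mono) simp_all
  finally show ?thesis
    using T_err by (simp add: power2_eq_square power3_eq_cube mult_ac)
qed

theorem mainTheorem8:
  fixes S :: "'d::euclidean_space \<Rightarrow> 'n::euclidean_space"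
    and DS :: "'d \<Rightarrow> ('d \<Rightarrow>\<^sub>L 'n)"
    and D2S :: "'d \<Rightarrow> ('d \<Rightarrow>\<^sub>L ('d \<Rightarrow>\<^sub>L 'n))"
    and lam0 lam_min lam_max M :: real
    and b :: 'n
  assumes S_deriv: "\<And>x. (S has_derivative blinfun_apply (DS x)) (at x)"
    and DS_deriv: "\<And>x. (DS has_derivative blinfun_apply (D2S x)) (at x)"
    and D2S_cont: "continuous_on UNIV D2S"
    and S_bdd: "bounded (range S)"
    and DS_bdd: "bounded (range DS)"
    and D2S_bdd: "bounded (range D2S)"
    and lam_min_pos: "0 < lam_min"
    and lam_min_max: "lam_min \<le> lam_max"
  shows "\<exists>C::real. \<forall>(eps::real) (dt::real) (theta::real) (tau :: 'n \<Rightarrow>\<^sub>L 'n) (tauinv :: 'n \<Rightarrow>\<^sub>L 'n)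
           (V::'d) (T0::real) (X0::'d) (Y0::'n) (Y :: real \<Rightarrow> 'n) (T::real) (Tt::real).
     0 < eps \<longrightarrow> 0 < dt \<longrightarrow> 0 < theta \<longrightarrow>
     tau o\<^sub>L tauinv = id_blinfun \<longrightarrow> tauinv o\<^sub>L tau = id_blinfun \<longrightarrow>
     (\<forall>t\<ge>0. norm (semigrp tauinv t) \<le> M) \<longrightarrow>
     norm V = 1 \<longrightarrow>
     T0 \<le> T \<longrightarrow> T0 \<le> Tt \<longrightarrow>
     Y T0 = Y0 \<longrightarrow>
     (\<forall>t\<in>{T0..T}. (Y has_vector_derivative
         (- blinfun_apply tauinv (Y t - S (X0 + (eps * (t - T0)) *\<^sub>R V)))) (at t within {T0..T})) \<longrightarrow>
     (\<forall>t\<in>{T0..T}. lam_min \<le> rate lam0 b (S (X0 + (eps * (t - T0)) *\<^sub>R V) - Y t)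
                    \<and> rate lam0 b (S (X0 + (eps * (t - T0)) *\<^sub>R V) - Y t) \<le> lam_max) \<longrightarrow>
     (\<forall>t\<in>{T0..Tt}. lam_min \<le> rate lam0 b (disc_Z DS tau tauinv eps dt V T0 X0 (S X0 - Y0) t)
                    \<and> rate lam0 b (disc_Z DS tau tauinv eps dt V T0 X0 (S X0 - Y0) t) \<le> lam_max) \<longrightarrow>
     ((\<lambda>t. rate lam0 b (S (X0 + (eps * (t - T0)) *\<^sub>R V) - Y t)) has_integral theta) {T0..T} \<longrightarrow>
     ((\<lambda>t. rate lam0 b (disc_Z DS tau tauinv eps dt V T0 X0 (S X0 - Y0) t)) has_integral theta) {T0..Tt} \<longrightarrow>
     \<bar>T - Tt\<bar> \<le> C * eps^2 * dt * theta^2 \<and>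
     norm ((X0 + (eps * (T - T0)) *\<^sub>R V) - disc_X DS tau tauinv eps dt V T0 X0 (S X0 - Y0) Tt)
        \<le> C * eps^3 * dt * theta^2"
proof -
  obtain L where "0 < L" and L: "\<And>x. norm (D2S x) \<le> L"
    using D2S_bdd unfolding bounded_pos by auto
  have Lip: "norm (DS x - DS y) \<le> L * norm (x - y)" for x y
    using DS_deriv L by (intro differentiable_bound[of UNIV]) (auto simp flip: norm_blinfun.rep_eq)
  show ?thesis
    by (intro exI[of _ "norm b * M * L / lam_min ^ 3"] allI impI,
        rule jump_time_error[OF S_deriv Lip less_imp_le[OF \<open>0 < L\<close>] lam_min_pos]) auto
qed

end
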